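(* Let $P(Y)\in R[Y]$ be an $m$-triangular polynomial of degree $d$ and let $k_0,\ldots,k_a\ge0$ be integers. Then the polynomial $P(Y)\prod_{j=0}^a\big(U^{(j)}(Y)\big)^{k_j}$ is $\big(m+\sum_{j=0}^ak_j\big)$-triangular. In particular, if $n=\sum_{j=0}^ak_j$ and $\sum_{j=0}^ajk_j=n$, this polynomial is $(m+n)$-triangular of degree $d+(a-1)n$.
   Context: Fix a positive integer $a$ and variables $u_0,\ldots,u_a$. Let $R=\mathbb{C}[u_0,\ldots,u_{a-1}][u_a,u_a^{-1}]$ and $U(Y)=\sum_{j=0}^au_jY^j\in R[Y]$; $U^{(j)}$ is its $j$-th derivative with respect to $Y$. $\mathbb{Q}_+$ denotes the positive rational numbers. For an integer $m\ge1$, a polynomial $P(Y)=\sum_{l=0}^dp_lY^l\in R[Y]$ of degree $d\ge a$ is called $m$-triangular if for every $l$ with $d-a\le l\le d$ one has $p_l=q_lu_a^{m-1}u_{a-d+l}+P_l(u_{a-d+l+1},\ldots,u_a)$ for some $q_l\in\mathbb{Q}_+$ and some polynomial $P_l\in\mathbb{C}[u_{a-d+l+1},\ldots,u_a]$ (for $l=d$ this means $p_d=q_du_a^m$). *)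

theory Defs
  imports "HOL-Library.Poly_Mapping" "HOL-Computational_Algebra.Polynomial"
begin

text \<open>Laurent polynomials over C in the variables u_0, u_1, ...: a monomial is a finitely
  supported exponent vector nat to int, a Laurent polynomial a finitely supported map from
  monomials to complex coefficients (with convolution product). The ring
  R = C[u_0..u_{a-1}][u_a, u_a^-1] is the subring singled out by in_R.\<close>

type_synonym laurent = "(nat \<Rightarrow>\<^sub>0 int) \<Rightarrow>\<^sub>0 complex"

definition uvar :: "nat \<Rightarrow> laurent" where
  "uvar j = Poly_Mapping.single (Poly_Mapping.single j 1) 1"

definition cst :: "complex \<Rightarrow> laurent" where
  "cst c = Poly_Mapping.single 0 c"

definition in_R :: "nat \<Rightarrow> laurent \<Rightarrow> bool" where
  "in_R a r \<longleftrightarrow> (\<forall>mon \<in> Poly_Mapping.keys r. \<forall>i.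
      (a < i \<longrightarrow> Poly_Mapping.lookup mon i = 0) \<and> (i < a \<longrightarrow> Poly_Mapping.lookup mon i \<ge> 0))"

definition poly_in_vars :: "nat set \<Rightarrow> laurent \<Rightarrow> bool" where
  "poly_in_vars S r \<longleftrightarrow> (\<forall>mon \<in> Poly_Mapping.keys r. \<forall>i. Poly_Mapping.lookup mon i \<noteq> 0 \<longrightarrow> i \<in> S \<and> Poly_Mapping.lookup mon i > 0)"

definition Upoly :: "nat \<Rightarrow> laurent poly" where
  "Upoly a = (\<Sum>j\<le>a. monom (uvar j) j)"

definition m_triangular :: "nat \<Rightarrow> nat \<Rightarrow> laurent poly \<Rightarrow> bool" where
  "m_triangular a m P \<longleftrightarrow>
     m \<ge> 1 \<and> (\<forall>i. in_R a (coeff P i)) \<and> degree P \<ge> a \<and>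
     (\<forall>l. degree P - a \<le> l \<and> l \<le> degree P \<longrightarrow>
        (\<exists>q::rat. q > 0 \<and> (\<exists>Pl. poly_in_vars {a + l - degree P + 1 .. a} Pl \<and>
            (l = degree P \<longrightarrow> Pl = 0) \<and>
            coeff P l = cst (of_rat q) * uvar a ^ (m - 1) * uvar (a + l - degree P) + Pl)))"

end

theory Submission
  imports Defs
begin

text \<open>Read a polynomial of degree at most D from the top, the coefficient of Y^(D-i) being its
  i-th top coefficient. For i \<le> a, the i-th top coefficient of an m-triangular polynomial is
  q_i u_a^(m-1) u_(a-i) plus a polynomial in u_(a-i+1), ..., u_a; the same holds for U^(j) with
  m = 1, except that q_i = 0 for i > a - j. In a product the i-th top coefficient is a
  convolution in which only the two extreme terms involve u_(a-i), each as a leading term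
  q_0 u_a^(...) of one factor times such a coefficient of the other; all middle terms are
  polynomials in u_(a-i+1), ..., u_a. So the shape survives, the exponents of u_a add up, and
  q_i > 0 holds for the product as soon as it holds for one factor. The leading term being
  nonzero, the degrees add as well.\<close>

definition top_coeff :: "'a::zero poly \<Rightarrow> nat \<Rightarrow> nat \<Rightarrow> 'a" where
  "top_coeff F D i = (if i \<le> D then coeff F (D - i) else 0)"

lemma top_coeff_mult:
  fixes F G :: "'a::comm_semiring_0 poly"
  assumes "degree F \<le> D1" "degree G \<le> D2"
  shows "top_coeff (F * G) (D1 + D2) i = (\<Sum>i1\<le>i. top_coeff F D1 i1 * top_coeff G D2 (i - i1))"
proof (cases "i \<le> D1 + D2")
  case False
  then have "(\<Sum>i1\<le>i. top_coeff F D1 i1 * top_coeff G D2 (i - i1)) = 0"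
    by (intro sum.neutral) (auto simp: top_coeff_def)
  then show ?thesis
    using False by (simp add: top_coeff_def del: mult_eq_0_iff)
next
  case True
  define n where "n = D1 + D2 - i"
  define S where "S = {k. k \<le> n \<and> k \<le> D1 \<and> n - k \<le> D2}"
  define T where "T = {i1. i1 \<le> i \<and> i1 \<le> D1 \<and> i - i1 \<le> D2}"
  have "top_coeff (F * G) (D1 + D2) i = (\<Sum>k\<le>n. coeff F k * coeff G (n - k))"
    using True by (simp add: top_coeff_def n_def coeff_mult)
  also have "\<dots> = (\<Sum>k\<in>S. coeff F k * coeff G (n - k))"
    using assms by (intro sum.mono_neutral_right) (auto simp: S_def dest!: mult_not_zero le_degree)
  also have "\<dots> = (\<Sum>i1\<in>T. coeff F (D1 - i1) * coeff G (D2 - (i - i1)))"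
  proof (rule sum.reindex_bij_witness[of _ "\<lambda>k. D1 - k" "\<lambda>i1. D1 - i1"])
    fix k assume "k \<in> S"
    then have "D1 - (D1 - k) = k" "D2 - (i - (D1 - k)) = n - k"
      using True by (auto simp: S_def n_def)
    then show "coeff F (D1 - (D1 - k)) * coeff G (D2 - (i - (D1 - k))) = coeff F k * coeff G (n - k)"
      by simp
  qed (use True in \<open>auto simp: S_def T_def n_def\<close>)
  also have "\<dots> = (\<Sum>i1\<le>i. top_coeff F D1 i1 * top_coeff G D2 (i - i1))"
    by (intro sum.mono_neutral_cong_left) (auto simp: T_def top_coeff_def)
  finally show ?thesis .
qed

lemma top_coeff_mult_extremes:
  fixes F G :: "'a::comm_semiring_0 poly"
  assumes "degree F \<le> D1" "degree G \<le> D2" "1 \<le> i"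
  shows "top_coeff (F * G) (D1 + D2) i =
    top_coeff F D1 0 * top_coeff G D2 i + top_coeff F D1 i * top_coeff G D2 0 +
    (\<Sum>i1\<in>{1..<i}. top_coeff F D1 i1 * top_coeff G D2 (i - i1))"
proof -
  have "{..i} = insert 0 (insert i {1..<i})"
    using assms(3) by auto
  then show ?thesis
    using assms by (simp add: top_coeff_mult add.assoc)
qed

definition add_submonoid :: "'a::monoid_add set \<Rightarrow> bool" where
  "add_submonoid M \<longleftrightarrow> 0 \<in> M \<and> (\<forall>x\<in>M. \<forall>y\<in>M. x + y \<in> M)"

definition supported_in :: "'m set \<Rightarrow> ('m \<Rightarrow>\<^sub>0 'b::zero) \<Rightarrow> bool" where
  "supported_in M r \<longleftrightarrow> Poly_Mapping.keys r \<subseteq> M"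

lemma supported_in_0 [simp]: "supported_in M 0"
  by (simp add: supported_in_def)

lemma supported_in_add:
  "supported_in M r \<Longrightarrow> supported_in M s \<Longrightarrow> supported_in M (r + s)"
  using keys_add[of r s] by (auto simp: supported_in_def)

lemma supported_in_sum:
  "(\<And>i. i \<in> I \<Longrightarrow> supported_in M (f i)) \<Longrightarrow> supported_in M (sum f I)"
  by (induction I rule: infinite_finite_induct) (auto intro: supported_in_add)

context
  fixes M :: "'m::comm_monoid_add set"
  assumes M: "add_submonoid M"
begin

lemma supported_in_mult:
  fixes r s :: "'m \<Rightarrow>\<^sub>0 'b::semiring_0"
  shows "supported_in M r \<Longrightarrow> supported_in M s \<Longrightarrow> supported_in M (r * s)"
  using keys_mult[of r s] M unfolding supported_in_def add_submonoid_def by blast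

lemma supported_in_single_0: "supported_in M (Poly_Mapping.single 0 c)"
  using M by (simp add: supported_in_def add_submonoid_def)

lemma supported_in_one: "supported_in M (1 :: 'm \<Rightarrow>\<^sub>0 'b::semiring_1)"
  using M by (auto simp: supported_in_def add_submonoid_def)

lemma supported_in_power:
  fixes r :: "'m \<Rightarrow>\<^sub>0 'b::semiring_1"
  shows "supported_in M r \<Longrightarrow> supported_in M (r ^ n)"
  by (induction n) (auto intro: supported_in_mult supported_in_one)

end

definition monomials_R :: "nat \<Rightarrow> (nat \<Rightarrow>\<^sub>0 int) set" where
  "monomials_R a = {mon. \<forall>i. (a < i \<longrightarrow> Poly_Mapping.lookup mon i = 0) \<and>
                             (i < a \<longrightarrow> Poly_Mapping.lookup mon i \<ge> 0)}"

definition monomials_in_vars :: "nat set \<Rightarrow> (nat \<Rightarrow>\<^sub>0 int) set" where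
  "monomials_in_vars S = {mon. \<forall>i. Poly_Mapping.lookup mon i \<noteq> 0 \<longrightarrow> i \<in> S \<and> Poly_Mapping.lookup mon i > 0}"

lemma in_R_iff_supported_in: "in_R a r \<longleftrightarrow> supported_in (monomials_R a) r"
  by (auto simp: in_R_def supported_in_def monomials_R_def)

lemma poly_in_vars_iff_supported_in: "poly_in_vars S r \<longleftrightarrow> supported_in (monomials_in_vars S) r"
  by (auto simp: poly_in_vars_def supported_in_def monomials_in_vars_def)

lemma add_submonoid_monomials_R: "add_submonoid (monomials_R a)"
  by (auto simp: add_submonoid_def monomials_R_def lookup_add)

lemma add_submonoid_monomials_in_vars: "add_submonoid (monomials_in_vars S)"
  unfolding add_submonoid_def monomials_in_vars_def
  by (auto simp: lookup_add) (metis add.right_neutral add.left_neutral add_pos_pos)+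

lemma cst_mult: "cst x * cst y = cst (x * y)"
  by (simp add: cst_def mult_single)

lemma cst_add: "cst x + cst y = cst (x + y)"
  by (simp add: cst_def single_add)

lemma of_nat_eq_cst: "(of_nat n :: laurent) = cst (of_nat n)"
  by (simp add: cst_def)

lemma uvar_power: "uvar j ^ n = Poly_Mapping.single (Poly_Mapping.single j (int n)) 1"
  by (induction n) (simp_all add: uvar_def mult_single single_add[symmetric] algebra_simps)

lemma cst_times_uvar_power_eq_0_iff: "cst c * uvar j ^ n = 0 \<longleftrightarrow> c = 0"
  by (simp add: uvar_power cst_def mult_single) (metis lookup_single_eq lookup_zero single_zero)

lemma poly_in_vars_add: "poly_in_vars S r \<Longrightarrow> poly_in_vars S s \<Longrightarrow> poly_in_vars S (r + s)"
  unfolding poly_in_vars_iff_supported_in by (rule supported_in_add)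

lemma poly_in_vars_mult: "poly_in_vars S r \<Longrightarrow> poly_in_vars S s \<Longrightarrow> poly_in_vars S (r * s)"
  unfolding poly_in_vars_iff_supported_in
  by (rule supported_in_mult[OF add_submonoid_monomials_in_vars])

lemma poly_in_vars_sum: "(\<And>i. i \<in> I \<Longrightarrow> poly_in_vars S (f i)) \<Longrightarrow> poly_in_vars S (sum f I)"
  unfolding poly_in_vars_iff_supported_in by (rule supported_in_sum)

lemma poly_in_vars_power: "poly_in_vars S r \<Longrightarrow> poly_in_vars S (r ^ n)"
  unfolding poly_in_vars_iff_supported_in
  by (rule supported_in_power[OF add_submonoid_monomials_in_vars])

lemma poly_in_vars_cst: "poly_in_vars S (cst c)"
  unfolding poly_in_vars_iff_supported_in cst_def
  by (rule supported_in_single_0[OF add_submonoid_monomials_in_vars])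

lemma poly_in_vars_mono: "poly_in_vars S r \<Longrightarrow> S \<subseteq> T \<Longrightarrow> poly_in_vars T r"
  by (auto simp: poly_in_vars_def)

lemma poly_in_vars_uvar: "j \<in> S \<Longrightarrow> poly_in_vars S (uvar j)"
  by (auto simp: poly_in_vars_def uvar_def lookup_single)

lemma in_R_mult: "in_R a r \<Longrightarrow> in_R a s \<Longrightarrow> in_R a (r * s)"
  unfolding in_R_iff_supported_in by (rule supported_in_mult[OF add_submonoid_monomials_R])

lemma in_R_sum: "(\<And>i. i \<in> I \<Longrightarrow> in_R a (f i)) \<Longrightarrow> in_R a (sum f I)"
  unfolding in_R_iff_supported_in by (rule supported_in_sum)

lemma in_R_cst: "in_R a (cst c)"
  unfolding in_R_iff_supported_in cst_def
  by (rule supported_in_single_0[OF add_submonoid_monomials_R])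

lemma in_R_uvar: "j \<le> a \<Longrightarrow> in_R a (uvar j)"
  by (auto simp: in_R_def uvar_def lookup_single)

text \<open>With e = m - 1 and strict, this is m-triangularity read from the top; U^(j) satisfies it
  with e = 0 only non-strictly.\<close>

definition top_triangular :: "nat \<Rightarrow> nat \<Rightarrow> nat \<Rightarrow> laurent poly \<Rightarrow> bool \<Rightarrow> bool" where
  "top_triangular a e D F strict \<longleftrightarrow> degree F \<le> D \<and>
     (\<exists>q::rat. q > 0 \<and> top_coeff F D 0 = cst (of_rat q) * uvar a ^ Suc e) \<and>
     (\<forall>i\<in>{1..a}. \<exists>q::rat. q \<ge> 0 \<and> (strict \<longrightarrow> q > 0) \<and>
        (\<exists>r. poly_in_vars {a - i + 1..a} r \<and>
             top_coeff F D i = cst (of_rat q) * uvar a ^ e * uvar (a - i) + r))"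

lemma top_triangular_top_coeff_in_vars:
  assumes "top_triangular a e D F strict" "j < i" "i \<le> a"
  shows "poly_in_vars {a - i + 1..a} (top_coeff F D j)"
proof (cases "j = 0")
  case True
  then obtain q where "top_coeff F D j = cst (of_rat q) * uvar a ^ Suc e"
    using assms(1) unfolding top_triangular_def by blast
  then show ?thesis
    using assms by (auto intro!: poly_in_vars_mult poly_in_vars_cst poly_in_vars_power poly_in_vars_uvar)
next
  case False
  then obtain q r where "poly_in_vars {a - j + 1..a} r"
      "top_coeff F D j = cst (of_rat q) * uvar a ^ e * uvar (a - j) + r"
    using assms unfolding top_triangular_def by fastforce
  then show ?thesis
    using assms False
    by (auto intro!: poly_in_vars_add poly_in_vars_mult poly_in_vars_cst poly_in_vars_power
        poly_in_vars_uvar elim!: poly_in_vars_mono)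
qed

lemma top_triangular_mult:
  assumes F: "top_triangular a e1 D1 F s1" and G: "top_triangular a e2 D2 G s2"
  shows "top_triangular a (e1 + e2 + 1) (D1 + D2) (F * G) (s1 \<or> s2)"
proof -
  obtain f0 where dF: "degree F \<le> D1" and f0: "f0 > 0"
      "top_coeff F D1 0 = cst (of_rat f0) * uvar a ^ Suc e1"
    using F unfolding top_triangular_def by blast
  obtain g0 where dG: "degree G \<le> D2" and g0: "g0 > 0"
      "top_coeff G D2 0 = cst (of_rat g0) * uvar a ^ Suc e2"
    using G unfolding top_triangular_def by blast
  have "degree (F * G) \<le> D1 + D2"
    using degree_mult_le[of F G] dF dG by linarith
  moreover have "top_coeff (F * G) (D1 + D2) 0 = cst (of_rat (f0 * g0)) * uvar a ^ Suc (e1 + e2 + 1)"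
    using top_coeff_mult[OF dF dG, of 0] f0 g0
    by (simp add: cst_mult of_rat_mult power_add algebra_simps)
  moreover have "\<exists>q::rat. q \<ge> 0 \<and> (s1 \<or> s2 \<longrightarrow> q > 0) \<and>
      (\<exists>r. poly_in_vars {a - i + 1..a} r \<and>
           top_coeff (F * G) (D1 + D2) i = cst (of_rat q) * uvar a ^ (e1 + e2 + 1) * uvar (a - i) + r)"
    if i: "i \<in> {1..a}" for i
  proof -
    let ?S = "{a - i + 1..a}"
    obtain fi rf where fi: "fi \<ge> 0" "s1 \<longrightarrow> fi > 0" "poly_in_vars ?S rf"
        "top_coeff F D1 i = cst (of_rat fi) * uvar a ^ e1 * uvar (a - i) + rf"
      using F i unfolding top_triangular_def by blast
    obtain gi rg where gi: "gi \<ge> 0" "s2 \<longrightarrow> gi > 0" "poly_in_vars ?S rg"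
        "top_coeff G D2 i = cst (of_rat gi) * uvar a ^ e2 * uvar (a - i) + rg"
      using G i unfolding top_triangular_def by blast
    define mid where "mid = (\<Sum>i1\<in>{1..<i}. top_coeff F D1 i1 * top_coeff G D2 (i - i1))"
    define r where "r = top_coeff F D1 0 * rg + rf * top_coeff G D2 0 + mid"
    have "poly_in_vars ?S mid"
      unfolding mid_def using i
      by (intro poly_in_vars_sum poly_in_vars_mult top_triangular_top_coeff_in_vars[OF F]
          top_triangular_top_coeff_in_vars[OF G]) auto
    then have "poly_in_vars ?S r"
      unfolding r_def using i fi(3) gi(3)
      by (intro poly_in_vars_add poly_in_vars_mult top_triangular_top_coeff_in_vars[OF F]
          top_triangular_top_coeff_in_vars[OF G]) auto
    moreover have "top_coeff (F * G) (D1 + D2) i =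
        (cst (of_rat f0) * cst (of_rat gi) + cst (of_rat fi) * cst (of_rat g0)) *
          uvar a ^ (e1 + e2 + 1) * uvar (a - i) + r"
      using top_coeff_mult_extremes[OF dF dG, of i] i
      unfolding r_def mid_def f0(2) g0(2) fi(4) gi(4) by (simp add: power_add algebra_simps)
    moreover have "f0 * gi + fi * g0 \<ge> 0" and "s1 \<or> s2 \<longrightarrow> f0 * gi + fi * g0 > 0"
      using f0(1) g0(1) fi(1,2) gi(1,2)
      by (auto simp: add_pos_nonneg add_nonneg_pos)
    ultimately show ?thesis
      by (intro exI[of _ "f0 * gi + fi * g0"]) (simp add: cst_mult cst_add of_rat_mult of_rat_add)
  qed
  ultimately show ?thesis
    unfolding top_triangular_def using f0(1) g0(1) by (metis mult_pos_pos)
qed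

lemma top_triangular_mult_power:
  assumes F: "top_triangular a e D F strict" and G: "top_triangular a 0 D' G False"
  shows "top_triangular a (e + k) (D + k * D') (F * G ^ k) strict"
proof (induction k)
  case 0
  then show ?case using F by simp
next
  case (Suc k)
  from top_triangular_mult[OF this G] show ?case
    by (simp add: algebra_simps)
qed

lemma top_triangular_mult_prod:
  assumes "finite A" "\<And>j. j \<in> A \<Longrightarrow> top_triangular a 0 (D' j) (G j) False"
    and "top_triangular a e D F strict"
  shows "top_triangular a (e + (\<Sum>j\<in>A. k j)) (D + (\<Sum>j\<in>A. k j * D' j))
           (F * (\<Prod>j\<in>A. G j ^ k j)) strict"
  using assms
proof (induction A arbitrary: e D F rule: finite_induct)
  case empty
  then show ?case by simp
next
  case (insert x A)
  have "top_triangular a (e + k x) (D + k x * D' x) (F * G x ^ k x) strict"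
    using insert.prems by (intro top_triangular_mult_power) auto
  from insert.IH[OF _ this] insert.prems insert.hyps show ?case
    by (simp add: algebra_simps)
qed

lemma coeff_Upoly: "coeff (Upoly a) i = (if i \<le> a then uvar i else 0)"
  by (simp add: Upoly_def coeff_sum coeff_monom)

lemma coeff_higher_pderiv_Upoly:
  "coeff ((pderiv ^^ j) (Upoly a)) n =
     (if n + j \<le> a then of_nat (pochhammer (Suc n) j) * uvar (n + j) else 0)"
  using pochhammer_of_nat[of "Suc n" j, where 'a = laurent]
  by (simp add: coeff_higher_pderiv coeff_Upoly)

lemma higher_pderiv_Upoly_top_triangular:
  assumes "j \<le> a"
  shows "top_triangular a 0 (a - j) ((pderiv ^^ j) (Upoly a)) False"
proof -
  let ?U = "(pderiv ^^ j) (Upoly a)"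
  define c :: "nat \<Rightarrow> rat" where "c n = of_nat (pochhammer (Suc n) j)" for n
  have coeff_U: "coeff ?U n = cst (of_rat (c n)) * uvar (n + j)" if "n + j \<le> a" for n
    using that by (simp add: coeff_higher_pderiv_Upoly of_nat_eq_cst c_def)
  have "degree ?U \<le> a - j"
    by (rule degree_le) (auto simp: coeff_higher_pderiv_Upoly)
  moreover have "c (a - j) > 0"
    using pochhammer_pos[of "Suc (a - j)" j] by (simp add: c_def)
  moreover have "top_coeff ?U (a - j) 0 = cst (of_rat (c (a - j))) * uvar a ^ Suc 0"
    using assms coeff_U[of "a - j"] by (simp add: top_coeff_def)
  moreover have "\<exists>q::rat. q \<ge> 0 \<and> (\<exists>r. poly_in_vars {a - i + 1..a} r \<and>
      top_coeff ?U (a - j) i = cst (of_rat q) * uvar a ^ 0 * uvar (a - i) + r)" for i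
  proof (cases "i \<le> a - j")
    case True
    then have "top_coeff ?U (a - j) i = cst (of_rat (c (a - j - i))) * uvar a ^ 0 * uvar (a - i) + 0"
      using assms coeff_U[of "a - j - i"] by (simp add: top_coeff_def)
    then show ?thesis
      by (intro exI[of _ "c (a - j - i)"] conjI exI[of _ 0]) (simp_all add: c_def poly_in_vars_def)
  next
    case False
    then have "top_coeff ?U (a - j) i = cst (of_rat 0) * uvar a ^ 0 * uvar (a - i) + 0"
      by (simp add: top_coeff_def cst_def)
    then show ?thesis
      by (intro exI[of _ 0] conjI exI[of _ 0]) (simp_all add: poly_in_vars_def)
  qed
  ultimately show ?thesis
    unfolding top_triangular_def by blast
qed

definition poly_over_R :: "nat \<Rightarrow> laurent poly \<Rightarrow> bool" where
  "poly_over_R a F \<longleftrightarrow> (\<forall>i. in_R a (coeff F i))"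

lemma poly_over_R_mult: "poly_over_R a F \<Longrightarrow> poly_over_R a G \<Longrightarrow> poly_over_R a (F * G)"
  unfolding poly_over_R_def coeff_mult by (auto intro!: in_R_sum in_R_mult)

lemma poly_over_R_one: "poly_over_R a 1"
  using in_R_cst[of a 1] by (auto simp: poly_over_R_def coeff_1 cst_def in_R_def)

lemma poly_over_R_prod: "(\<And>j. j \<in> A \<Longrightarrow> poly_over_R a (G j)) \<Longrightarrow> poly_over_R a (\<Prod>j\<in>A. G j)"
  by (induction A rule: infinite_finite_induct) (auto intro: poly_over_R_one poly_over_R_mult)

lemma poly_over_R_power: "poly_over_R a F \<Longrightarrow> poly_over_R a (F ^ n)"
  using poly_over_R_prod[of "{..<n}" a "\<lambda>_. F"] by simp

lemma poly_over_R_higher_pderiv_Upoly: "poly_over_R a ((pderiv ^^ j) (Upoly a))"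
  by (auto simp: poly_over_R_def coeff_higher_pderiv_Upoly of_nat_eq_cst in_R_def[of _ 0]
      intro!: in_R_mult in_R_cst in_R_uvar)

lemma m_triangular_imp_top_triangular:
  assumes "m_triangular a m P"
  shows "top_triangular a (m - 1) (degree P) P True"
proof -
  let ?d = "degree P"
  have m: "m \<ge> 1" and da: "a \<le> ?d"
    using assms unfolding m_triangular_def by blast+
  have coeff_P: "\<exists>q::rat. q > 0 \<and> (\<exists>r. poly_in_vars {a + l - ?d + 1..a} r \<and> (l = ?d \<longrightarrow> r = 0) \<and>
      coeff P l = cst (of_rat q) * uvar a ^ (m - 1) * uvar (a + l - ?d) + r)"
    if "?d - a \<le> l" "l \<le> ?d" for l
    using assms that unfolding m_triangular_def by blast
  have "\<exists>q::rat. q > 0 \<and> top_coeff P ?d 0 = cst (of_rat q) * uvar a ^ Suc (m - 1)"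
    using coeff_P[of ?d] by (auto simp: top_coeff_def mult.assoc mult.commute[of "uvar a"])
  moreover have "\<exists>q::rat. q > 0 \<and> (\<exists>r. poly_in_vars {a - i + 1..a} r \<and>
      top_coeff P ?d i = cst (of_rat q) * uvar a ^ (m - 1) * uvar (a - i) + r)"
    if i: "i \<in> {1..a}" for i
  proof -
    have "?d - a \<le> ?d - i" "a + (?d - i) - ?d = a - i"
      using i da by auto
    then show ?thesis
      using coeff_P[of "?d - i"] i da by (auto simp: top_coeff_def)
  qed
  ultimately show ?thesis
    unfolding top_triangular_def by (blast intro: less_imp_le)
qed

lemma top_triangular_imp_m_triangular:
  assumes T: "top_triangular a e D F True" and R: "poly_over_R a F" and "a \<le> D"
  shows "m_triangular a (Suc e) F" and "degree F = D"
proof -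
  obtain q0 where "degree F \<le> D" and q0: "q0 > 0"
      "coeff F D = cst (of_rat q0) * uvar a ^ Suc e"
    using T unfolding top_triangular_def top_coeff_def by auto
  moreover have "coeff F D \<noteq> 0"
    using q0 cst_times_uvar_power_eq_0_iff by (metis of_rat_eq_0_iff less_irrefl)
  ultimately show deg: "degree F = D"
    by (meson antisym le_degree)
  have "\<exists>q::rat. q > 0 \<and> (\<exists>r. poly_in_vars {a + l - D + 1..a} r \<and> (l = D \<longrightarrow> r = 0) \<and>
      coeff F l = cst (of_rat q) * uvar a ^ (Suc e - 1) * uvar (a + l - D) + r)"
    if l: "D - a \<le> l" "l \<le> D" for l
  proof (cases "l = D")
    case True
    then show ?thesis
      using q0 by (intro exI[of _ q0]) (auto simp: poly_in_vars_def mult.assoc mult.commute[of "uvar a"])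
  next
    case False
    define i where "i = D - l"
    have i: "i \<in> {1..a}" "l = D - i" "a + l - D = a - i"
      using l False \<open>a \<le> D\<close> by (auto simp: i_def)
    then obtain q r where "q > 0" "poly_in_vars {a - i + 1..a} r"
        "coeff F l = cst (of_rat q) * uvar a ^ e * uvar (a - i) + r"
      using T \<open>a \<le> D\<close> unfolding top_triangular_def top_coeff_def by fastforce
    then show ?thesis
      using i False by auto
  qed
  then show "m_triangular a (Suc e) F"
    unfolding m_triangular_def using deg \<open>a \<le> D\<close> R by (auto simp: poly_over_R_def)
qed

lemma sum_codegrees_eq:
  fixes k :: "nat \<Rightarrow> nat"
  assumes "(\<Sum>j\<le>a. j * k j) = (\<Sum>j\<le>a. k j)"
  shows "(\<Sum>j\<le>a. k j * (a - j)) = (a - 1) * (\<Sum>j\<le>a. k j)"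
proof -
  have "(\<Sum>j\<le>a. k j * (a - j)) + (\<Sum>j\<le>a. j * k j) = (\<Sum>j\<le>a. a * k j)"
    by (simp add: sum.distrib[symmetric] diff_mult_distrib2 algebra_simps)
  then show ?thesis
    using assms by (simp add: sum_distrib_left[symmetric] diff_mult_distrib)
qed

theorem mainTheorem5:
  fixes a m d :: nat and P :: "laurent poly" and k :: "nat \<Rightarrow> nat"
  assumes "a > 0"
    and "m_triangular a m P"
    and "degree P = d"
  shows "m_triangular a (m + (\<Sum>j\<le>a. k j)) (P * (\<Prod>j\<le>a. ((pderiv ^^ j) (Upoly a)) ^ k j)) \<and>
         (\<forall>n. n = (\<Sum>j\<le>a. k j) \<and> (\<Sum>j\<le>a. j * k j) = n \<longrightarrow>
           m_triangular a (m + n) (P * (\<Prod>j\<le>a. ((pderiv ^^ j) (Upoly a)) ^ k j)) \<and>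
           degree (P * (\<Prod>j\<le>a. ((pderiv ^^ j) (Upoly a)) ^ k j)) = d + (a - 1) * n)"
proof -
  let ?Q = "\<Prod>j\<le>a. ((pderiv ^^ j) (Upoly a)) ^ k j"
  have "m \<ge> 1" and "a \<le> d"
    using assms(2,3) unfolding m_triangular_def by auto
  have "top_triangular a (m - 1) d P True"
    using m_triangular_imp_top_triangular[OF assms(2)] assms(3) by simp
  then have T: "top_triangular a (m - 1 + (\<Sum>j\<le>a. k j)) (d + (\<Sum>j\<le>a. k j * (a - j))) (P * ?Q) True"
    by (intro top_triangular_mult_prod higher_pderiv_Upoly_top_triangular) auto
  have "poly_over_R a P"
    using assms(2) unfolding m_triangular_def poly_over_R_def by blast
  then have R: "poly_over_R a (P * ?Q)"
    by (intro poly_over_R_mult poly_over_R_prod poly_over_R_power poly_over_R_higher_pderiv_Upoly)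
  have "m_triangular a (m + (\<Sum>j\<le>a. k j)) (P * ?Q)"
    using top_triangular_imp_m_triangular(1)[OF T R] \<open>m \<ge> 1\<close> \<open>a \<le> d\<close> by simp
  moreover have "degree (P * ?Q) = d + (\<Sum>j\<le>a. k j * (a - j))"
    using top_triangular_imp_m_triangular(2)[OF T R] \<open>a \<le> d\<close> by simp
  ultimately show ?thesis
    using sum_codegrees_eq[of k a] by auto
qed

end
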